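(* Let $P(q)=\sum_{j=0}^{n} q^{j}a_{j}$ be a slice regular polynomial of degree $n$ with quaternionic coefficients $a_j\in\mathbb H$, and let $P'(q)=\sum_{j=1}^{n} q^{j-1}ja_{j}$. Then $$\|P'\|\leq n\|P\|,$$ where $\|F\|=\max_{|q|\leq 1}|F(q)|$. Moreover, equality holds if and only if $P(q)=q^{n}a_{n}$ for some $a_{n}\in\mathbb H$.
   Context: $\mathbb H$ denotes the real algebra of quaternions with basis $1,i,j,k$, $i^2=j^2=k^2=ijk=-1$, and modulus $|q|=\sqrt{q\bar q}$. A slice regular polynomial is a function $\mathbb H\to\mathbb H$ of the form $q\mapsto\sum_{j=0}^n q^j a_j$ with coefficients written on the right; it has degree $n$ if $a_n\neq 0$. Its derivative is $P'(q)=\sum_{j=1}^n q^{j-1}ja_j$. *)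

theory Defs
  imports "HOL-Analysis.Analysis"
begin

text \<open>Real quaternions q = q1 + q2 i + q3 j + q4 k, with i^2=j^2=k^2=ijk=-1.\<close>

datatype quat = Quat (Re: real) (Im1: real) (Im2: real) (Im3: real)

definition qzero :: quat where "qzero = Quat 0 0 0 0"
definition qone :: quat where "qone = Quat 1 0 0 0"

definition qadd :: "quat \<Rightarrow> quat \<Rightarrow> quat" where
  "qadd p q = Quat (Re p + Re q) (Im1 p + Im1 q) (Im2 p + Im2 q) (Im3 p + Im3 q)"

definition qmult :: "quat \<Rightarrow> quat \<Rightarrow> quat" where
  "qmult p q = Quat
     (Re p * Re q - Im1 p * Im1 q - Im2 p * Im2 q - Im3 p * Im3 q)
     (Re p * Im1 q + Im1 p * Re q + Im2 p * Im3 q - Im3 p * Im2 q)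
     (Re p * Im2 q - Im1 p * Im3 q + Im2 p * Re q + Im3 p * Im1 q)
     (Re p * Im3 q + Im1 p * Im2 q - Im2 p * Im1 q + Im3 p * Re q)"

definition qscale :: "real \<Rightarrow> quat \<Rightarrow> quat" where
  "qscale r q = Quat (r * Re q) (r * Im1 q) (r * Im2 q) (r * Im3 q)"

definition qpow :: "quat \<Rightarrow> nat \<Rightarrow> quat" where
  "qpow q n = (qmult q ^^ n) qone"

definition qnorm :: "quat \<Rightarrow> real" where
  "qnorm q = sqrt ((Re q)^2 + (Im1 q)^2 + (Im2 q)^2 + (Im3 q)^2)"

definition qsum :: "(nat \<Rightarrow> quat) \<Rightarrow> nat set \<Rightarrow> quat" where
  "qsum f A = Quat (\<Sum>j\<in>A. Re (f j)) (\<Sum>j\<in>A. Im1 (f j)) (\<Sum>j\<in>A. Im2 (f j)) (\<Sum>j\<in>A. Im3 (f j))"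

definition spoly :: "(nat \<Rightarrow> quat) \<Rightarrow> nat \<Rightarrow> quat \<Rightarrow> quat" where
  "spoly a n q = qsum (\<lambda>j. qmult (qpow q j) (a j)) {0..n}"

definition spoly_deriv :: "(nat \<Rightarrow> quat) \<Rightarrow> nat \<Rightarrow> quat \<Rightarrow> quat" where
  "spoly_deriv a n q = qsum (\<lambda>j. qmult (qpow q (j - 1)) (qscale (real j) (a j))) {1..n}"

text \<open>Sup norm on the closed unit ball (a maximum for continuous F).\<close>
definition unit_ball_norm :: "(quat \<Rightarrow> quat) \<Rightarrow> real" where
  "unit_ball_norm F = (SUP q\<in>{q. qnorm q \<le> 1}. qnorm (F q))"

end

theory Submission
  imports Defs "HOL-Complex_Analysis.Conformal_Mappings" "HOL-Computational_Algebra.Polynomial"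
begin

text \<open>
  Conjugation \<open>q \<mapsto> r q r\<^sup>-\<^sup>1\<close> is an isometric automorphism of \<open>H\<close> that carries \<open>P\<close> to the
  polynomial with conjugated coefficients, and every quaternion is conjugate to one in the complex
  slice \<open>\<complex> \<subseteq> H\<close>. It therefore suffices to study \<open>P(z) = \<Sum> z\<^sup>j a\<^sub>j\<close> for complex \<open>z\<close>, a polynomial
  with coefficients in \<open>H \<cong> \<complex>\<^sup>2\<close>. There M. Riesz's interpolation formula
  \<open>z P'(z) = (n/2) P(z) - \<Sum>\<^bsub>w\<^sup>n = -1\<^esub> \<rho>\<^sub>w P(z w)\<close>, with \<open>\<rho>\<^sub>w > 0\<close> and \<open>\<Sum> \<rho>\<^sub>w = n/2\<close>,
  bounds \<open>|P'|\<close> by \<open>n \<parallel>P\<parallel>\<close> on the unit circle, and the maximum modulus principle extends the bound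
  to the disc. If equality holds, \<open>|P'|\<close> attains \<open>n \<parallel>P\<parallel>\<close> on the unit sphere; then the weighted
  triangle inequality in Riesz's formula is an equality, so the \<open>n + 1\<close> values \<open>w\<^sup>n P(z w)\<close>
  coincide, and \<open>v \<mapsto> P(z v) - v\<^sup>n E\<close> has more roots than its degree: all coefficients below
  \<open>a\<^sub>n\<close> vanish.
\<close>

section \<open>Quaternions as a real normed division algebra\<close>

lemma quat_eqI:
  "Defs.Re p = Defs.Re q \<Longrightarrow> Im1 p = Im1 q \<Longrightarrow> Im2 p = Im2 q \<Longrightarrow> Im3 p = Im3 q \<Longrightarrow> p = q"
  by (cases p; cases q) auto

lemma quat_eq_iff:
  "p = q \<longleftrightarrow> Defs.Re p = Defs.Re q \<and> Im1 p = Im1 q \<and> Im2 p = Im2 q \<and> Im3 p = Im3 q"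
  using quat_eqI by blast

instantiation quat :: ab_group_add
begin
definition "0 = qzero"
definition "p + q = qadd p q"
definition "- q = Quat (- Defs.Re q) (- Im1 q) (- Im2 q) (- Im3 q)"
definition "p - q = Quat (Defs.Re p - Defs.Re q) (Im1 p - Im1 q) (Im2 p - Im2 q) (Im3 p - Im3 q)"
instance
  by standard (auto simp: zero_quat_def plus_quat_def uminus_quat_def minus_quat_def
      qzero_def qadd_def quat_eq_iff)
end

lemma quat_add_simps [simp]:
  "Defs.Re 0 = 0" "Im1 0 = 0" "Im2 0 = 0" "Im3 0 = 0"
  "Defs.Re (p + q) = Defs.Re p + Defs.Re q" "Im1 (p + q) = Im1 p + Im1 q"
  "Im2 (p + q) = Im2 p + Im2 q" "Im3 (p + q) = Im3 p + Im3 q"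
  "Defs.Re (p - q) = Defs.Re p - Defs.Re q" "Im1 (p - q) = Im1 p - Im1 q"
  "Im2 (p - q) = Im2 p - Im2 q" "Im3 (p - q) = Im3 p - Im3 q"
  "Defs.Re (- q) = - Defs.Re q" "Im1 (- q) = - Im1 q" "Im2 (- q) = - Im2 q" "Im3 (- q) = - Im3 q"
  by (simp_all add: zero_quat_def plus_quat_def uminus_quat_def minus_quat_def qzero_def qadd_def)

instantiation quat :: real_vector
begin
definition "scaleR r q = qscale r q"
instance
  by standard (auto simp: scaleR_quat_def qscale_def quat_eq_iff algebra_simps)
end

lemma quat_scaleR_simps [simp]:
  "Defs.Re (r *\<^sub>R q) = r * Defs.Re q" "Im1 (r *\<^sub>R q) = r * Im1 q"
  "Im2 (r *\<^sub>R q) = r * Im2 q" "Im3 (r *\<^sub>R q) = r * Im3 q"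
  by (simp_all add: scaleR_quat_def qscale_def)

instantiation quat :: real_inner
begin
definition "inner p q = Defs.Re p * Defs.Re q + Im1 p * Im1 q + Im2 p * Im2 q + Im3 p * Im3 q"
definition "norm q = qnorm q"
definition "sgn q = q /\<^sub>R norm q" for q :: quat
definition "dist p q = norm (p - q)" for p q :: quat
definition [code del]:
  "(uniformity :: (quat \<times> quat) filter) = (INF e\<in>{0 <..}. principal {(x, y). dist x y < e})"
definition [code del]:
  "open (U :: quat set) \<longleftrightarrow> (\<forall>x\<in>U. eventually (\<lambda>(x', y). x' = x \<longrightarrow> y \<in> U) uniformity)"
instance
proof
  fix x y z :: quat and r :: real and U :: "quat set"
  show "dist x y = norm (x - y)" by (simp add: dist_quat_def)
  show "sgn x = x /\<^sub>R norm x" by (simp add: sgn_quat_def)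
  show "uniformity = (INF e\<in>{0 <..}. principal {(x, y::quat). dist x y < e})"
    by (simp add: uniformity_quat_def)
  show "open U = (\<forall>x\<in>U. \<forall>\<^sub>F (x', y) in uniformity. x' = x \<longrightarrow> y \<in> U)"
    by (simp add: open_quat_def)
  show "inner x y = inner y x" by (simp add: inner_quat_def algebra_simps)
  show "inner (x + y) z = inner x z + inner y z" by (simp add: inner_quat_def algebra_simps)
  show "inner (r *\<^sub>R x) y = r * inner x y" by (simp add: inner_quat_def algebra_simps)
  show "0 \<le> inner x x" by (simp add: inner_quat_def)
  show "inner x x = 0 \<longleftrightarrow> x = 0"
    by (auto simp add: inner_quat_def quat_eq_iff add_nonneg_eq_0_iff)
  show "norm x = sqrt (inner x x)"
    by (simp add: norm_quat_def qnorm_def inner_quat_def power2_eq_square)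
qed
end

lemma norm_quat_square: "(norm q)\<^sup>2 = (Defs.Re q)\<^sup>2 + (Im1 q)\<^sup>2 + (Im2 q)\<^sup>2 + (Im3 q)\<^sup>2"
  by (simp add: norm_quat_def qnorm_def)

instantiation quat :: real_normed_div_algebra
begin
definition "1 = qone"
definition "p * q = qmult p q"
definition "inverse q = (1 / (norm q)\<^sup>2) *\<^sub>R Quat (Defs.Re q) (- Im1 q) (- Im2 q) (- Im3 q)"
definition "p div q = p * inverse q" for p q :: quat

lemma quat_mult_simps [simp]:
  "Defs.Re 1 = 1" "Im1 1 = 0" "Im2 1 = 0" "Im3 1 = 0"
  "Defs.Re (p * q) = Defs.Re p * Defs.Re q - Im1 p * Im1 q - Im2 p * Im2 q - Im3 p * Im3 q"
  "Im1 (p * q) = Defs.Re p * Im1 q + Im1 p * Defs.Re q + Im2 p * Im3 q - Im3 p * Im2 q"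
  "Im2 (p * q) = Defs.Re p * Im2 q - Im1 p * Im3 q + Im2 p * Defs.Re q + Im3 p * Im1 q"
  "Im3 (p * q) = Defs.Re p * Im3 q + Im1 p * Im2 q - Im2 p * Im1 q + Im3 p * Defs.Re q"
  by (simp_all add: one_quat_def times_quat_def qone_def qmult_def)

lemma quat_inverse_mult:
  fixes x :: quat
  assumes "x \<noteq> 0"
  shows "inverse x * x = 1" "x * inverse x = 1"
proof -
  have "(Defs.Re x)\<^sup>2 + (Im1 x)\<^sup>2 + (Im2 x)\<^sup>2 + (Im3 x)\<^sup>2 \<noteq> 0"
    using assms by (simp flip: norm_quat_square)
  then show "inverse x * x = 1" "x * inverse x = 1"
    unfolding inverse_quat_def quat_eq_iff norm_quat_square
    by (simp_all add: divide_simps) (simp_all add: power2_eq_square algebra_simps)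
qed

instance
proof
  fix x y z :: quat and r :: real
  show "x * y * z = x * (y * z)" by (simp add: quat_eq_iff algebra_simps)
  show "(x + y) * z = x * z + y * z" by (simp add: quat_eq_iff algebra_simps)
  show "x * (y + z) = x * y + x * z" by (simp add: quat_eq_iff algebra_simps)
  show "r *\<^sub>R x * y = r *\<^sub>R (x * y)" by (simp add: quat_eq_iff algebra_simps)
  show "x * r *\<^sub>R y = r *\<^sub>R (x * y)" by (simp add: quat_eq_iff algebra_simps)
  show "1 * x = x" by (simp add: quat_eq_iff)
  show "x * 1 = x" by (simp add: quat_eq_iff)
  show "(0::quat) \<noteq> 1" by (simp add: quat_eq_iff)
  show "x div y = x * inverse y" by (simp add: divide_quat_def)
  show "inverse (0::quat) = 0" by (simp add: inverse_quat_def quat_eq_iff)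
  show "x \<noteq> 0 \<Longrightarrow> inverse x * x = 1" "x \<noteq> 0 \<Longrightarrow> x * inverse x = 1"
    by (simp_all add: quat_inverse_mult)
  have "(norm (x * y))\<^sup>2 = (norm x * norm y)\<^sup>2"
    unfolding power_mult_distrib norm_quat_square by (simp add: power2_eq_square algebra_simps)
  then show "norm (x * y) = norm x * norm y"
    by simp
qed
end

lemma quat_sum_simps:
  "Defs.Re (sum f A) = (\<Sum>j\<in>A. Defs.Re (f j))" "Im1 (sum f A) = (\<Sum>j\<in>A. Im1 (f j))"
  "Im2 (sum f A) = (\<Sum>j\<in>A. Im2 (f j))" "Im3 (sum f A) = (\<Sum>j\<in>A. Im3 (f j))"
  by (induct A rule: infinite_finite_induct, simp_all)+

lemma qpow_eq_power: "qpow q n = q ^ n"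
proof -
  have "(qmult q ^^ n) qone = q ^ n"
    by (induct n) (simp_all add: times_quat_def one_quat_def)
  then show ?thesis by (simp add: qpow_def)
qed

lemma qsum_eq_sum: "qsum f A = sum f A"
  by (rule quat_eqI) (simp_all add: qsum_def quat_sum_simps)

lemma spoly_eq: "spoly a n q = (\<Sum>j\<le>n. q ^ j * a j)"
  by (simp add: spoly_def qsum_eq_sum times_quat_def qpow_eq_power atLeast0AtMost)

lemma spoly_deriv_eq: "spoly_deriv a n q = (\<Sum>j=1..n. q ^ (j - 1) * (real j *\<^sub>R a j))"
  by (simp add: spoly_deriv_def qsum_eq_sum times_quat_def qpow_eq_power scaleR_quat_def)

lemma unit_ball_norm_eq: "unit_ball_norm F = (SUP q\<in>{q. norm q \<le> 1}. norm (F q))"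
  by (simp add: unit_ball_norm_def norm_quat_def)

section \<open>The complex slice\<close>

definition quat_of_complex :: "complex \<Rightarrow> quat" where
  "quat_of_complex z = Quat (Complex.Re z) (Complex.Im z) 0 0"

text \<open>Every quaternion is \<open>q = quat_of_complex (cd_fst q) + quat_of_complex (cd_snd q) * j\<close>.\<close>

definition cd_fst :: "quat \<Rightarrow> complex" where "cd_fst q = Complex (Defs.Re q) (Im1 q)"
definition cd_snd :: "quat \<Rightarrow> complex" where "cd_snd q = Complex (Im2 q) (Im3 q)"

lemma quat_of_complex_simps [simp]:
  "Defs.Re (quat_of_complex z) = Complex.Re z" "Im1 (quat_of_complex z) = Complex.Im z"
  "Im2 (quat_of_complex z) = 0" "Im3 (quat_of_complex z) = 0"
  by (simp_all add: quat_of_complex_def)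

lemma quat_of_complex_mult: "quat_of_complex (z * w) = quat_of_complex z * quat_of_complex w"
  by (rule quat_eqI) simp_all

lemma quat_of_complex_power: "quat_of_complex (z ^ j) = quat_of_complex z ^ j"
  by (induct j) (simp_all add: quat_of_complex_mult, simp add: quat_eq_iff)

lemma quat_of_complex_of_real_mult: "quat_of_complex (of_real r * z) = r *\<^sub>R quat_of_complex z"
  by (rule quat_eqI) simp_all

lemma quat_of_complex_of_real: "quat_of_complex (of_real r) = r *\<^sub>R 1"
  by (rule quat_eqI) simp_all

lemma quat_of_complex_sum: "quat_of_complex (sum f A) = (\<Sum>x\<in>A. quat_of_complex (f x))"
  by (rule quat_eqI) (simp_all add: quat_sum_simps)

lemma quat_of_complex_1 [simp]: "quat_of_complex 1 = 1"
  by (rule quat_eqI) simp_all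

lemma norm_quat_of_complex [simp]: "norm (quat_of_complex z) = cmod z"
  by (simp add: norm_quat_def qnorm_def cmod_def)

lemma cd_fst_simps [simp]: "Complex.Re (cd_fst q) = Defs.Re q" "Complex.Im (cd_fst q) = Im1 q"
  by (simp_all add: cd_fst_def)

lemma cd_snd_simps [simp]: "Complex.Re (cd_snd q) = Im2 q" "Complex.Im (cd_snd q) = Im3 q"
  by (simp_all add: cd_snd_def)

lemma cd_fst_slice_mult: "cd_fst (quat_of_complex z * q) = z * cd_fst q"
  by (simp add: complex_eq_iff)

lemma cd_snd_slice_mult: "cd_snd (quat_of_complex z * q) = z * cd_snd q"
  by (simp add: complex_eq_iff)

lemma cd_fst_sum: "cd_fst (sum f A) = (\<Sum>x\<in>A. cd_fst (f x))"
  by (simp add: complex_eq_iff quat_sum_simps)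

lemma cd_snd_sum: "cd_snd (sum f A) = (\<Sum>x\<in>A. cd_snd (f x))"
  by (simp add: complex_eq_iff quat_sum_simps)

lemma cd_fst_0 [simp]: "cd_fst 0 = 0" and cd_snd_0 [simp]: "cd_snd 0 = 0"
  by (simp_all add: complex_eq_iff)

lemma cd_fst_1 [simp]: "cd_fst 1 = 1"
  by (simp add: complex_eq_iff)

lemma norm_cd_fst_le: "cmod (cd_fst q) \<le> norm q"
  by (simp add: norm_quat_def qnorm_def cmod_def add.assoc)

lemma cd_eq_0_imp_eq_0: "cd_fst q = 0 \<Longrightarrow> cd_snd q = 0 \<Longrightarrow> q = 0"
  by (rule quat_eqI) (simp_all add: complex_eq_iff)

section \<open>M. Riesz's interpolation formula\<close>

definition neg_one_root :: "nat \<Rightarrow> nat \<Rightarrow> complex" where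
  "neg_one_root n k = cis (pi / n) * cis (2 * pi * k / n)"

lemma cis_power_cancel: "0 < n \<Longrightarrow> cis (x / n) ^ n = cis x"
  unfolding Complex.DeMoivre by simp

lemma cis_two_pi_div_power: "0 < n \<Longrightarrow> cis (2 * pi * real k / n) ^ n = 1"
  by (simp add: cis_power_cancel)

lemma cis_pi_div_power: "0 < n \<Longrightarrow> cis (pi / n) ^ n = -1"
  by (simp add: cis_power_cancel)

lemma neg_one_root_power: "0 < n \<Longrightarrow> neg_one_root n k ^ n = -1"
  by (simp add: neg_one_root_def power_mult_distrib cis_two_pi_div_power cis_pi_div_power)

lemma norm_neg_one_root [simp]: "cmod (neg_one_root n k) = 1"
  by (simp add: neg_one_root_def norm_mult)

lemma neg_one_root_neq_1: "0 < n \<Longrightarrow> neg_one_root n k \<noteq> 1"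
  using neg_one_root_power[of n k] by auto

lemma inj_on_neg_one_root: "0 < n \<Longrightarrow> inj_on (neg_one_root n) {..<n}"
  using bij_betw_imp_inj_on[OF Complex.bij_betw_roots_unity]
  by (simp add: inj_on_def neg_one_root_def)

lemma sum_neg_one_root_power:
  assumes "0 < t" "t < n"
  shows "(\<Sum>k<n. neg_one_root n k ^ t) = 0"
proof -
  define x where "x = cis (2 * pi * real t / n)"
  have "x \<noteq> cis (2 * pi * real 0 / n)"
    using inj_onD[OF bij_betw_imp_inj_on[OF Complex.bij_betw_roots_unity], of n t 0] assms
    by (auto simp: x_def)
  then have "x \<noteq> 1" by simp
  moreover have "x ^ n = 1" using assms by (simp add: x_def cis_two_pi_div_power)
  moreover have "neg_one_root n k ^ t = cis (pi / n) ^ t * x ^ k" for k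
  proof -
    have "cis (2 * pi * real k / n) ^ t = x ^ k"
      unfolding x_def Complex.DeMoivre by (simp add: mult_ac)
    then show ?thesis by (simp add: neg_one_root_def power_mult_distrib)
  qed
  ultimately show ?thesis
    by (simp add: geometric_sum flip: sum_distrib_left)
qed

lemma inverse_one_minus_neg_one_root:
  assumes "0 < n"
  shows "1 / (1 - neg_one_root n k) = (\<Sum>m<n. neg_one_root n k ^ m) / 2"
proof -
  have "neg_one_root n k - 1 \<noteq> 0" using neg_one_root_neq_1[OF assms] by simp
  then show ?thesis
    by (simp add: geometric_sum[OF neg_one_root_neq_1[OF assms]] neg_one_root_power[OF assms]
        divide_simps)
qed

lemma sum_neg_one_root_power_div:
  assumes "j < n"
  shows "(\<Sum>k<n. neg_one_root n k ^ Suc j / (1 - neg_one_root n k)) = - of_nat n / 2"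
proof -
  have n: "0 < n" using assms by simp
  from assms have "j \<le> n - 1" by simp
  then show ?thesis
  proof (induction j rule: inc_induct)
    case base
    have "(\<Sum>k<n. neg_one_root n k ^ Suc (n - 1) / (1 - neg_one_root n k))
        = (\<Sum>k<n. - ((\<Sum>m<n. neg_one_root n k ^ m) / 2))"
      using n by (simp add: neg_one_root_power inverse_one_minus_neg_one_root[symmetric])
    also have "\<dots> = - (\<Sum>m<n. \<Sum>k<n. neg_one_root n k ^ m) / 2"
      by (subst sum.swap) (simp add: sum_negf flip: sum_divide_distrib)
    also have "(\<Sum>m<n. \<Sum>k<n. neg_one_root n k ^ m) = (\<Sum>m<n. if m = 0 then of_nat n else 0)"
      by (rule sum.cong) (auto simp: sum_neg_one_root_power)
    finally show ?case using n by simp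
  next
    case (step j)
    have "neg_one_root n k ^ Suc j / (1 - neg_one_root n k)
        = neg_one_root n k ^ Suc (Suc j) / (1 - neg_one_root n k) + neg_one_root n k ^ Suc j" for k
    proof -
      have "1 - neg_one_root n k \<noteq> 0" using neg_one_root_neq_1[of n k] step by simp
      then show ?thesis by (simp add: divide_simps) (simp add: algebra_simps)
    qed
    then show ?case
      using step sum_neg_one_root_power[of "Suc j" n] by (simp add: sum.distrib)
  qed
qed

lemma sum_neg_one_root_power_div_square:
  assumes "0 < n" "j \<le> n"
  shows "(\<Sum>k<n. neg_one_root n k ^ Suc j / (1 - neg_one_root n k)\<^sup>2)
    = of_nat n * (2 * of_nat j - of_nat n) / 4"
proof -
  define S where "S i = (\<Sum>k<n. neg_one_root n k ^ Suc i / (1 - neg_one_root n k)\<^sup>2)" for i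
  have S_Suc: "S (Suc i) = S i + of_nat n / 2" if "i < n" for i
  proof -
    have "neg_one_root n k ^ Suc (Suc i) / (1 - neg_one_root n k)\<^sup>2
        = neg_one_root n k ^ Suc i / (1 - neg_one_root n k)\<^sup>2
          - neg_one_root n k ^ Suc i / (1 - neg_one_root n k)" for k
    proof -
      have "1 - neg_one_root n k \<noteq> 0" using neg_one_root_neq_1[OF assms(1)] by simp
      then show ?thesis by (simp add: divide_simps power2_eq_square) (simp add: algebra_simps)
    qed
    then show ?thesis
      using sum_neg_one_root_power_div[OF that] by (simp add: S_def sum_subtractf)
  qed
  have S_lin: "S i = S 0 + of_nat i * of_nat n / 2" if "i \<le> n" for i
    using that by (induction i) (simp_all add: S_Suc algebra_simps)
  have "S n = - S 0"
    using neg_one_root_power[OF assms(1)] by (simp add: S_def sum_negf)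
  then have S0: "S 0 = - of_nat n * of_nat n / 4"
    using S_lin[of n] by (simp add: field_simps eq_neg_iff_add_eq_0 add.commute)
  have "S j = S 0 + of_nat j * of_nat n / 2" by (rule S_lin[OF assms(2)])
  also have "\<dots> = of_nat n * (2 * of_nat j - of_nat n) / 4" unfolding S0 by (simp add: field_simps)
  finally show ?thesis by (simp add: S_def)
qed

lemma unit_complex_one_minus_square:
  assumes "cmod w = 1"
  shows "(1 - w)\<^sup>2 = - 2 * w * of_real (1 - Complex.Re w)"
proof -
  have "(Complex.Re w)\<^sup>2 + (Complex.Im w)\<^sup>2 = 1" using assms by (simp add: cmod_def)
  then show ?thesis by (simp add: complex_eq_iff power2_eq_square algebra_simps)
qed

lemma unit_complex_Re_less_1:
  assumes "cmod w = 1" "w \<noteq> 1"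
  shows "Complex.Re w < 1"
proof -
  have "Complex.Re w \<noteq> 1"
  proof
    assume "Complex.Re w = 1"
    moreover have "(Complex.Re w)\<^sup>2 + (Complex.Im w)\<^sup>2 = 1" using assms by (simp add: cmod_def)
    ultimately show False using assms(2) by (simp add: complex_eq_iff)
  qed
  with complex_Re_le_cmod[of w] assms(1) show ?thesis by simp
qed

definition riesz_node :: "nat \<Rightarrow> nat \<Rightarrow> complex" where
  "riesz_node n k = (if k < n then neg_one_root n k else 1)"

text \<open>For \<open>k < n\<close> this is the weight \<open>-2w / (n (1 - w)\<^sup>2)\<close> of Riesz's formula at the root
  \<open>w\<close> of \<open>-1\<close>, written as a visibly positive real; the extra node \<open>1\<close> carries \<open>n/2\<close>.\<close>

definition riesz_weight :: "nat \<Rightarrow> nat \<Rightarrow> real" where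
  "riesz_weight n k = (if k < n then 1 / (n * (1 - Complex.Re (neg_one_root n k))) else n / 2)"

lemma riesz_weight_pos: "0 < n \<Longrightarrow> 0 < riesz_weight n k"
  using unit_complex_Re_less_1[OF norm_neg_one_root neg_one_root_neq_1, of n k]
  by (simp add: riesz_weight_def)

lemma of_real_riesz_weight:
  assumes "0 < n" "k < n"
  shows "of_real (riesz_weight n k)
    = - 2 * neg_one_root n k / (of_nat n * (1 - neg_one_root n k)\<^sup>2)"
proof -
  have "1 - Complex.Re (neg_one_root n k) \<noteq> 0"
    using unit_complex_Re_less_1[OF norm_neg_one_root neg_one_root_neq_1, of n k] assms by simp
  moreover have "neg_one_root n k \<noteq> 0"
    using norm_neg_one_root[of n k] by (metis norm_zero zero_neq_one)
  ultimately show ?thesis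
    using assms by (simp add: riesz_weight_def unit_complex_one_minus_square field_simps)
qed

lemma sum_riesz_weight_neg_one_root:
  assumes "0 < n" "j \<le> n"
  shows "(\<Sum>k<n. of_real (riesz_weight n k) * neg_one_root n k ^ j) = of_nat n / 2 - of_nat j"
proof -
  have "(\<Sum>k<n. of_real (riesz_weight n k) * neg_one_root n k ^ j)
      = - 2 / of_nat n * (\<Sum>k<n. neg_one_root n k ^ Suc j / (1 - neg_one_root n k)\<^sup>2)"
    by (simp add: sum_distrib_left of_real_riesz_weight[OF assms(1)] field_simps)
  also have "\<dots> = of_nat n / 2 - of_nat j"
    unfolding sum_neg_one_root_power_div_square[OF assms] using assms by (simp add: field_simps)
  finally show ?thesis .
qed

lemma riesz_moment:
  assumes "0 < n" "j \<le> n"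
  shows "(\<Sum>k\<le>n. of_real (riesz_weight n k) * riesz_node n k ^ (n + j)) = of_nat j"
proof -
  have "(\<Sum>k\<le>n. of_real (riesz_weight n k) * riesz_node n k ^ (n + j))
      = of_nat n / 2 - (\<Sum>k<n. of_real (riesz_weight n k) * neg_one_root n k ^ j)"
    using assms(1)
    by (simp add: lessThan_Suc_atMost[symmetric] riesz_node_def riesz_weight_def power_add
        neg_one_root_power sum_negf)
  then show ?thesis using sum_riesz_weight_neg_one_root[OF assms] by simp
qed

lemma sum_riesz_weight: "0 < n \<Longrightarrow> (\<Sum>k\<le>n. riesz_weight n k) = n"
proof -
  assume n: "0 < n"
  have "complex_of_real (\<Sum>k<n. riesz_weight n k) = of_nat n / 2"
    using sum_riesz_weight_neg_one_root[OF n, of 0] by simp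
  then have "(\<Sum>k<n. riesz_weight n k) = n / 2"
    by (metis of_real_divide of_real_eq_iff of_real_numeral of_real_of_nat_eq)
  then show ?thesis by (simp add: lessThan_Suc_atMost[symmetric] riesz_weight_def)
qed

lemma norm_riesz_node [simp]: "cmod (riesz_node n k) = 1"
  by (simp add: riesz_node_def)

lemma riesz_node_power_square: "0 < n \<Longrightarrow> (riesz_node n k ^ n)\<^sup>2 = 1"
  by (simp add: riesz_node_def neg_one_root_power)

lemma inj_on_riesz_node: "0 < n \<Longrightarrow> inj_on (riesz_node n) {..n}"
  using inj_on_neg_one_root[of n] neg_one_root_neq_1[of n]
  by (auto simp: inj_on_def riesz_node_def split: if_splits)

lemma riesz_interpolation:
  assumes "0 < n"
  shows "quat_of_complex z * spoly_deriv a n (quat_of_complex z)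
    = (\<Sum>k\<le>n. riesz_weight n k *\<^sub>R (quat_of_complex (riesz_node n k ^ n)
        * spoly a n (quat_of_complex (z * riesz_node n k))))"
proof -
  let ?s = quat_of_complex and ?u = "riesz_node n" and ?w = "riesz_weight n"
  have "?s z * spoly_deriv a n (?s z) = (\<Sum>j=1..n. real j *\<^sub>R (?s z ^ j * a j))"
    unfolding spoly_deriv_eq sum_distrib_left
  proof (rule sum.cong)
    fix j assume "j \<in> {1..n}"
    then have "?s z * ?s z ^ (j - 1) = ?s z ^ j" by (cases j) auto
    then show "?s z * (?s z ^ (j - 1) * (real j *\<^sub>R a j)) = real j *\<^sub>R (?s z ^ j * a j)"
      by (metis mult.assoc mult_scaleR_right)
  qed simp
  also have "\<dots> = (\<Sum>j\<le>n. real j *\<^sub>R (?s z ^ j * a j))"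
    by (simp add: atMost_atLeast0 sum.atLeast_Suc_atMost[of 0 n])
  also have "\<dots> = (\<Sum>j\<le>n. ?s (\<Sum>k\<le>n. of_real (?w k) * (?u k ^ n * (z * ?u k) ^ j)) * a j)"
  proof (rule sum.cong)
    fix j assume "j \<in> {..n}"
    then have "(\<Sum>k\<le>n. of_real (?w k) * (?u k ^ n * (z * ?u k) ^ j))
        = (\<Sum>k\<le>n. of_real (?w k) * ?u k ^ (n + j)) * z ^ j"
      by (simp add: sum_distrib_left sum_distrib_right power_mult_distrib power_add mult_ac)
    also have "\<dots> = of_real (real j) * z ^ j"
      using riesz_moment[OF assms, of j] \<open>j \<in> {..n}\<close> by simp
    finally show "real j *\<^sub>R (?s z ^ j * a j)
        = ?s (\<Sum>k\<le>n. of_real (?w k) * (?u k ^ n * (z * ?u k) ^ j)) * a j"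
      by (simp add: quat_of_complex_of_real_mult[of "real j", simplified] quat_of_complex_power)
  qed simp
  also have "\<dots> = (\<Sum>j\<le>n. \<Sum>k\<le>n. ?w k *\<^sub>R (?s (?u k ^ n) * (?s (z * ?u k) ^ j * a j)))"
    by (simp add: quat_of_complex_sum sum_distrib_right quat_of_complex_of_real
        quat_of_complex_mult quat_of_complex_power mult.assoc)
  also have "\<dots> = (\<Sum>k\<le>n. ?w k *\<^sub>R (?s (?u k ^ n) * spoly a n (?s (z * ?u k))))"
    by (subst sum.swap) (simp add: spoly_eq sum_distrib_left scaleR_sum_right)
  finally show ?thesis .
qed

section \<open>Bernstein's inequality on the complex slice\<close>

lemma norm_weighted_sum_eq_imp_eq:
  fixes x :: "'i \<Rightarrow> 'a::real_inner"
  assumes "finite I" and pos: "\<And>i. i \<in> I \<Longrightarrow> 0 < w i"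
    and bound: "\<And>i. i \<in> I \<Longrightarrow> norm (x i) \<le> M"
    and eq: "norm (\<Sum>i\<in>I. w i *\<^sub>R x i) = sum w I * M" and "i \<in> I"
  shows "sum w I *\<^sub>R x i = (\<Sum>i\<in>I. w i *\<^sub>R x i)"
proof -
  define V where "V = (\<Sum>i\<in>I. w i *\<^sub>R x i)"
  define W where "W = sum w I"
  have slack: "0 \<le> w i * (M * norm V - inner (x i) V)" if "i \<in> I" for i
  proof -
    have "inner (x i) V \<le> M * norm V"
      using norm_cauchy_schwarz[of "x i" V] mult_right_mono[OF bound[OF that] norm_ge_zero[of V]]
      by linarith
    then show ?thesis using pos[OF that] by simp
  qed
  have "(\<Sum>i\<in>I. w i * (M * norm V - inner (x i) V)) = W * M * norm V - inner V V"
    by (simp add: V_def W_def inner_sum_left right_diff_distrib sum_subtractf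
        sum_distrib_right mult.assoc)
  also have "inner V V = W * M * norm V"
    using eq by (simp add: V_def W_def dot_square_norm power2_eq_square)
  finally have "(\<Sum>i\<in>I. w i * (M * norm V - inner (x i) V)) = 0" by simp
  then have "w i * (M * norm V - inner (x i) V) = 0"
    using slack \<open>i \<in> I\<close> by (subst (asm) sum_nonneg_eq_0_iff[OF \<open>finite I\<close>]) auto
  then have inner_eq: "inner (x i) V = W * M * M"
    using pos[OF \<open>i \<in> I\<close>] eq[folded V_def W_def] by (simp add: mult_ac)
  have "(norm (W *\<^sub>R x i - V))\<^sup>2 = W * W * (norm (x i))\<^sup>2 - 2 * W * inner (x i) V + (norm V)\<^sup>2"
    by (simp add: dot_square_norm[symmetric] inner_commute algebra_simps)
  also have "\<dots> \<le> W * W * M\<^sup>2 - 2 * W * (W * M * M) + (W * M)\<^sup>2"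
    using power_mono[OF bound[OF \<open>i \<in> I\<close>] norm_ge_zero, of 2]
    by (simp add: inner_eq eq[folded V_def W_def] mult_left_mono)
  also have "\<dots> = 0" by (simp add: power2_eq_square)
  finally show ?thesis by (simp add: V_def W_def)
qed

lemma poly_coeffs_eq_0_if_roots:
  fixes c :: "nat \<Rightarrow> 'a::idom"
  assumes "finite A" "n < card A" "\<And>z. z \<in> A \<Longrightarrow> (\<Sum>j\<le>n. c j * z ^ j) = 0" "j \<le> n"
  shows "c j = 0"
proof -
  define p where "p = (\<Sum>j\<le>n. monom (c j) j)"
  have p_eval: "poly p z = (\<Sum>j\<le>n. c j * z ^ j)" for z
    by (simp add: p_def poly_sum poly_monom)
  have "degree p \<le> n"
    unfolding p_def by (rule degree_sum_le) (auto intro: order.trans[OF degree_monom_le])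
  have "p = 0"
  proof (rule ccontr)
    assume "p \<noteq> 0"
    then have "card A \<le> card {z. poly p z = 0}"
      using assms(1,3) by (intro card_mono poly_roots_finite) (auto simp: p_eval)
    also have "\<dots> \<le> degree p" by (rule card_poly_roots_bound[OF \<open>p \<noteq> 0\<close>])
    finally show False using \<open>degree p \<le> n\<close> assms(2) by linarith
  qed
  then have "coeff p j = 0" by simp
  then show ?thesis using assms(4) by (simp add: p_def coeff_sum coeff_monom)
qed

lemma slice_poly_coeffs_eq_0_if_roots:
  fixes b :: "nat \<Rightarrow> quat"
  assumes "finite A" "n < card A"
    and roots: "\<And>v. v \<in> A \<Longrightarrow> (\<Sum>j\<le>n. quat_of_complex v ^ j * b j) = 0" and "j \<le> n"
  shows "b j = 0"
proof (rule cd_eq_0_imp_eq_0)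
  have "cd_fst (\<Sum>j\<le>n. quat_of_complex v ^ j * b j) = 0"
    "cd_snd (\<Sum>j\<le>n. quat_of_complex v ^ j * b j) = 0" if "v \<in> A" for v
    using roots[OF that] by simp_all
  then have fst_roots: "(\<Sum>j\<le>n. cd_fst (b j) * v ^ j) = 0"
    and snd_roots: "(\<Sum>j\<le>n. cd_snd (b j) * v ^ j) = 0" if "v \<in> A" for v
    using that by (simp_all add: cd_fst_sum cd_snd_sum cd_fst_slice_mult cd_snd_slice_mult
        ac_simps flip: quat_of_complex_power)
  show "cd_fst (b j) = 0" by (rule poly_coeffs_eq_0_if_roots[OF assms(1,2) fst_roots assms(4)])
  show "cd_snd (b j) = 0" by (rule poly_coeffs_eq_0_if_roots[OF assms(1,2) snd_roots assms(4)])
qed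

lemma lower_coeffs_eq_0_if_monomial_values:
  assumes "finite A" "n < card A" "z \<noteq> 0"
    and monomial_values:
      "\<And>v. v \<in> A \<Longrightarrow> spoly a n (quat_of_complex (z * v)) = quat_of_complex v ^ n * E"
    and "j < n"
  shows "a j = 0"
proof -
  let ?s = quat_of_complex
  define b where "b i = ?s z ^ i * a i - (if i = n then E else 0)" for i
  have "(\<Sum>i\<le>n. ?s v ^ i * b i) = spoly a n (?s (z * v)) - ?s v ^ n * E" for v
  proof -
    have "?s (z * v) ^ i = ?s v ^ i * ?s z ^ i" for i
      by (simp add: power_mult_distrib mult.commute flip: quat_of_complex_power quat_of_complex_mult)
    then have "(\<Sum>i\<le>n. ?s v ^ i * (?s z ^ i * a i)) = spoly a n (?s (z * v))"
      by (simp add: spoly_eq mult.assoc)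
    moreover have "(\<Sum>i\<le>n. ?s v ^ i * (if i = n then E else 0)) = ?s v ^ n * E"
      by (simp add: if_distrib[of "times _"] cong: if_cong)
    ultimately show ?thesis
      by (simp add: b_def right_diff_distrib sum_subtractf)
  qed
  then have "b j = 0"
    using slice_poly_coeffs_eq_0_if_roots[OF assms(1,2), of b j] monomial_values \<open>j < n\<close> by simp
  moreover have "?s z \<noteq> 0" using \<open>z \<noteq> 0\<close> norm_quat_of_complex[of z] by fastforce
  ultimately show ?thesis using \<open>j < n\<close> by (simp add: b_def)
qed

lemma norm_riesz_term:
  assumes "cmod z = 1" and bound: "\<And>v. cmod v = 1 \<Longrightarrow> norm (spoly a n (quat_of_complex v)) \<le> M"
  shows "norm (quat_of_complex (riesz_node n k ^ n) * spoly a n (quat_of_complex (z * riesz_node n k))) \<le> M"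
  using bound[of "z * riesz_node n k"] assms(1) by (simp add: norm_mult norm_power)

lemma slice_bernstein_circle:
  assumes "0 < n" "cmod z = 1"
    and bound: "\<And>v. cmod v = 1 \<Longrightarrow> norm (spoly a n (quat_of_complex v)) \<le> M"
  shows "norm (spoly_deriv a n (quat_of_complex z)) \<le> n * M"
proof -
  have "norm (spoly_deriv a n (quat_of_complex z))
      = norm (quat_of_complex z * spoly_deriv a n (quat_of_complex z))"
    by (simp add: norm_mult assms(2))
  also have "\<dots> \<le> (\<Sum>k\<le>n. riesz_weight n k * M)"
    unfolding riesz_interpolation[OF assms(1)]
  proof (rule order.trans[OF norm_sum sum_mono])
    fix k
    show "norm (riesz_weight n k *\<^sub>R (quat_of_complex (riesz_node n k ^ n)
        * spoly a n (quat_of_complex (z * riesz_node n k)))) \<le> riesz_weight n k * M"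
      using norm_riesz_term[OF assms(2) bound] riesz_weight_pos[OF assms(1)]
      by (simp add: less_imp_le mult_left_mono)
  qed
  also have "\<dots> = n * M"
    by (simp add: sum_riesz_weight[OF assms(1)] flip: sum_distrib_right)
  finally show ?thesis .
qed

lemma slice_bernstein_circle_eq:
  assumes "0 < n" "cmod z = 1"
    and bound: "\<And>v. cmod v = 1 \<Longrightarrow> norm (spoly a n (quat_of_complex v)) \<le> M"
    and eq: "norm (spoly_deriv a n (quat_of_complex z)) = n * M" and "j < n"
  shows "a j = 0"
proof -
  let ?s = quat_of_complex and ?u = "riesz_node n"
  define x where "x k = ?s (?u k ^ n) * spoly a n (?s (z * ?u k))" for k
  define V where "V = (\<Sum>k\<le>n. riesz_weight n k *\<^sub>R x k)"
  define E where "E = (1 / n) *\<^sub>R V"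
  have "V = ?s z * spoly_deriv a n (?s z)"
    by (simp add: V_def x_def riesz_interpolation[OF assms(1)])
  then have "norm V = sum (riesz_weight n) {..n} * M"
    using eq assms(2) by (simp add: norm_mult sum_riesz_weight[OF assms(1)])
  then have scaled: "real n *\<^sub>R x k = V" if "k \<le> n" for k
    using norm_weighted_sum_eq_imp_eq[of "{..n}" "riesz_weight n" x M k, folded V_def] that
      riesz_weight_pos[OF assms(1)] norm_riesz_term[OF assms(2) bound]
    by (simp add: x_def sum_riesz_weight[OF assms(1)])
  have x_eq: "x k = E" if "k \<le> n" for k
    unfolding E_def scaled[OF that, symmetric] using assms(1) by simp
  have node_values: "spoly a n (?s (z * ?u k)) = ?s (?u k) ^ n * E" if "k \<le> n" for k
  proof -
    have "?s (?u k ^ n) * ?s (?u k ^ n) = 1"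
      using riesz_node_power_square[OF assms(1), of k]
      by (simp add: power2_eq_square flip: quat_of_complex_mult)
    then have "spoly a n (?s (z * ?u k)) = ?s (?u k ^ n) * x k"
      by (simp add: x_def flip: mult.assoc)
    then show ?thesis using x_eq[OF that] by (simp add: quat_of_complex_power)
  qed
  have "n < card (?u ` {..n})"
    using card_image[OF inj_on_riesz_node[OF assms(1)]] by simp
  moreover have "z \<noteq> 0" using assms(2) by auto
  ultimately show ?thesis
    using lower_coeffs_eq_0_if_monomial_values[of "?u ` {..n}" n z a E j] node_values \<open>j < n\<close>
    by auto
qed

lemma slice_maximum_modulus:
  assumes bound: "\<And>v. cmod v = 1 \<Longrightarrow> norm (spoly b m (quat_of_complex v)) \<le> K"
    and "cmod z \<le> 1"
  shows "norm (spoly b m (quat_of_complex z)) \<le> K"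
proof (cases "spoly b m (quat_of_complex z) = 0")
  case True
  then show ?thesis using bound[of 1] by (metis norm_ge_zero norm_one norm_zero order.trans)
next
  case False
  define V where "V = spoly b m (quat_of_complex z)"
  text \<open>Multiplying by \<open>V\<^sup>-\<^sup>1\<close> on the right keeps \<open>P\<close> a slice polynomial; its first
    Cayley--Dickson coordinate is a complex polynomial with value \<open>1\<close> at \<open>z\<close>.\<close>
  define g where "g w = (\<Sum>j\<le>m. w ^ j * cd_fst (b j * inverse V))" for w
  have g_eq: "g w = cd_fst (spoly b m (quat_of_complex w) * inverse V)" for w
    by (simp add: g_def spoly_eq sum_distrib_right cd_fst_sum mult.assoc cd_fst_slice_mult
        flip: quat_of_complex_power)
  have "cmod (g z) \<le> K / norm V"
  proof (rule maximum_modulus_frontier[of g "cball 0 1"])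
    have "g holomorphic_on UNIV" unfolding g_def by (intro holomorphic_intros)
    then show "g holomorphic_on interior (cball 0 1)" "continuous_on (closure (cball 0 1)) g"
      by (auto intro: holomorphic_on_subset holomorphic_on_imp_continuous_on)
    show "bounded (cball (0::complex) 1)" "z \<in> cball 0 1" using assms(2) by auto
    fix w :: complex assume "w \<in> frontier (cball 0 1)"
    then have "norm (spoly b m (quat_of_complex w)) \<le> K" by (intro bound) (simp add: frontier_cball)
    then have "norm (spoly b m (quat_of_complex w) * inverse V) \<le> K / norm V"
      unfolding norm_mult norm_inverse by (simp add: divide_right_mono flip: divide_inverse)
    then show "cmod (g w) \<le> K / norm V"
      unfolding g_eq by (rule order.trans[OF norm_cd_fst_le])
  qed
  moreover have "g z = 1" using False by (simp add: g_eq V_def)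
  ultimately show ?thesis using False by (simp add: V_def field_simps)
qed

section \<open>Rotating quaternions into the complex slice\<close>

definition conj_by :: "'a::division_ring \<Rightarrow> 'a \<Rightarrow> 'a" where
  "conj_by r q = r * q * inverse r"

lemma conj_by_mult:
  assumes "r \<noteq> 0"
  shows "conj_by r (p * q) = conj_by r p * conj_by r q"
proof -
  have "conj_by r p * conj_by r q = r * p * (inverse r * r) * q * inverse r"
    by (simp only: conj_by_def mult.assoc)
  also have "\<dots> = conj_by r (p * q)"
    by (simp only: left_inverse[OF assms] mult_1_right conj_by_def mult.assoc)
  finally show ?thesis ..
qed

lemma conj_by_power: "r \<noteq> 0 \<Longrightarrow> conj_by r (q ^ j) = conj_by r q ^ j"
  by (induct j) (simp_all add: conj_by_mult, simp add: conj_by_def)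

lemma conj_by_sum: "conj_by r (sum f A) = (\<Sum>x\<in>A. conj_by r (f x))"
  by (simp add: conj_by_def sum_distrib_left sum_distrib_right)

lemma conj_by_scaleR: "conj_by r (c *\<^sub>R q) = c *\<^sub>R conj_by r (q :: 'a::real_normed_div_algebra)"
  by (simp add: conj_by_def)

lemma norm_conj_by: "r \<noteq> 0 \<Longrightarrow> norm (conj_by r q) = norm (q :: 'a::real_normed_div_algebra)"
  by (simp add: conj_by_def norm_mult norm_inverse)

lemma conj_by_conj_by_inverse:
  assumes "r \<noteq> 0"
  shows "conj_by r (conj_by (inverse r) q) = q"
proof -
  have "conj_by r (conj_by (inverse r) q) = (r * inverse r) * q * (r * inverse r)"
    by (simp only: conj_by_def mult.assoc inverse_inverse_eq)
  then show ?thesis using assms by simp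
qed

lemma spoly_conj_by:
  "r \<noteq> 0 \<Longrightarrow> spoly (\<lambda>j. conj_by r (a j)) n (conj_by r q) = conj_by r (spoly a n q)"
  by (simp add: spoly_eq conj_by_sum conj_by_mult conj_by_power)

lemma spoly_deriv_conj_by:
  "r \<noteq> 0 \<Longrightarrow> spoly_deriv (\<lambda>j. conj_by r (a j)) n (conj_by r q) = conj_by r (spoly_deriv a n q)"
  by (simp add: spoly_deriv_eq conj_by_sum conj_by_mult conj_by_power conj_by_scaleR)

lemma conj_by_onto_slice: "\<exists>r z. r \<noteq> 0 \<and> conj_by r q = quat_of_complex z \<and> cmod z = norm q"
proof (cases "Im2 q = 0 \<and> Im3 q = 0")
  case True
  then have "conj_by 1 q = quat_of_complex (cd_fst q)" by (simp add: conj_by_def quat_eq_iff)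
  moreover have "cmod (cd_fst q) = norm q"
    using True by (simp add: norm_quat_def qnorm_def cmod_def)
  ultimately show ?thesis by (metis one_neq_zero)
next
  case False
  define s where "s = sqrt ((Im1 q)\<^sup>2 + (Im2 q)\<^sup>2 + (Im3 q)\<^sup>2)"
  have s2: "s * s = (Im1 q)\<^sup>2 + (Im2 q)\<^sup>2 + (Im3 q)\<^sup>2"
    by (simp add: s_def)
  text \<open>\<open>r\<close> rotates the imaginary part of \<open>q\<close> onto the positive \<open>i\<close>-axis.\<close>
  define r where "r = Quat (s + Im1 q) 0 (Im3 q) (- Im2 q)"
  define z where "z = Complex (Defs.Re q) s"
  have "r \<noteq> 0" using False by (auto simp: r_def quat_eq_iff)
  moreover have "r * q = quat_of_complex z * r"
    by (simp add: r_def z_def quat_eq_iff algebra_simps power2_eq_square s2)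
  then have "conj_by r q = quat_of_complex z"
    using \<open>r \<noteq> 0\<close> by (simp add: conj_by_def mult.assoc)
  moreover have "cmod z = norm q"
    by (simp add: z_def norm_quat_def qnorm_def cmod_def power2_eq_square s2 add.assoc)
  ultimately show ?thesis by blast
qed

lemma spoly_conj_by_circle_bound:
  assumes "r \<noteq> 0" and bound: "\<And>q. norm q = 1 \<Longrightarrow> norm (spoly a n q) \<le> M" and "cmod v = 1"
  shows "norm (spoly (\<lambda>j. conj_by r (a j)) n (quat_of_complex v)) \<le> M"
proof -
  define p where "p = conj_by (inverse r) (quat_of_complex v)"
  have "spoly (\<lambda>j. conj_by r (a j)) n (quat_of_complex v) = conj_by r (spoly a n p)"
    using assms(1) by (simp add: p_def conj_by_conj_by_inverse flip: spoly_conj_by)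
  moreover have "norm p = 1" using assms(1,3) by (simp add: p_def norm_conj_by)
  ultimately show ?thesis using bound assms(1) by (simp add: norm_conj_by)
qed

lemma spoly_maximum_modulus:
  assumes "\<And>q. norm q = 1 \<Longrightarrow> norm (spoly b m q) \<le> K" and "norm q \<le> 1"
  shows "norm (spoly b m q) \<le> K"
proof -
  obtain r z where r: "r \<noteq> 0" "conj_by r q = quat_of_complex z" "cmod z = norm q"
    using conj_by_onto_slice by blast
  have "norm (spoly (\<lambda>j. conj_by r (b j)) m (quat_of_complex z)) \<le> K"
    using slice_maximum_modulus[OF spoly_conj_by_circle_bound[OF r(1) assms(1)]] r(3) assms(2)
    by simp
  then show ?thesis
    using r(1) by (simp flip: r(2) add: spoly_conj_by norm_conj_by)
qed

lemma spoly_deriv_sphere_bound: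
  assumes "0 < n" and bound: "\<And>q. norm q = 1 \<Longrightarrow> norm (spoly a n q) \<le> M" and "norm q = 1"
  shows "norm (spoly_deriv a n q) \<le> n * M"
proof -
  obtain r z where r: "r \<noteq> 0" "conj_by r q = quat_of_complex z" "cmod z = norm q"
    using conj_by_onto_slice by blast
  have "norm (spoly_deriv (\<lambda>j. conj_by r (a j)) n (quat_of_complex z)) \<le> n * M"
    using slice_bernstein_circle[OF assms(1) _ spoly_conj_by_circle_bound[OF r(1) bound]] r(3) assms(3)
    by simp
  then show ?thesis
    using r(1) by (simp flip: r(2) add: spoly_deriv_conj_by norm_conj_by)
qed

lemma spoly_deriv_sphere_eq_imp_lower_coeffs_eq_0:
  assumes "0 < n" and bound: "\<And>q. norm q = 1 \<Longrightarrow> norm (spoly a n q) \<le> M" and "norm q = 1"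
    and eq: "norm (spoly_deriv a n q) = n * M" and "j < n"
  shows "a j = 0"
proof -
  obtain r z where r: "r \<noteq> 0" "conj_by r q = quat_of_complex z" "cmod z = norm q"
    using conj_by_onto_slice by blast
  have "norm (spoly_deriv (\<lambda>j. conj_by r (a j)) n (quat_of_complex z)) = n * M"
    using eq r(1) by (simp flip: r(2) add: spoly_deriv_conj_by norm_conj_by)
  then have "conj_by r (a j) = 0"
    using slice_bernstein_circle_eq[OF assms(1) _ spoly_conj_by_circle_bound[OF r(1) bound]]
      r(3) assms(3,5) by simp
  then show ?thesis using norm_conj_by[OF r(1), of "a j"] by simp
qed

section \<open>Bernstein's inequality for slice regular polynomials\<close>

definition deriv_coeffs :: "(nat \<Rightarrow> quat) \<Rightarrow> nat \<Rightarrow> quat" where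
  "deriv_coeffs a j = real (Suc j) *\<^sub>R a (Suc j)"

lemma spoly_deriv_eq_spoly: "0 < n \<Longrightarrow> spoly_deriv a n = spoly (deriv_coeffs a) (n - 1)"
proof (rule ext)
  fix q assume "0 < n"
  then obtain m where n: "n = Suc m" using gr0_conv_Suc by blast
  show "spoly_deriv a n q = spoly (deriv_coeffs a) (n - 1) q"
    unfolding spoly_deriv_eq spoly_eq n One_nat_def sum.shift_bounds_cl_Suc_ivl
    by (simp add: deriv_coeffs_def atMost_atLeast0)
qed

lemma norm_spoly_le_sum_norm: "norm q \<le> 1 \<Longrightarrow> norm (spoly a n q) \<le> (\<Sum>j\<le>n. norm (a j))"
  unfolding spoly_eq
  by (rule order.trans[OF norm_sum sum_mono])
    (simp add: norm_mult norm_power mult_left_le_one_le power_le_one)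

lemma unit_ball_norm_le: "(\<And>q. norm q \<le> 1 \<Longrightarrow> norm (F q) \<le> K) \<Longrightarrow> unit_ball_norm F \<le> K"
  unfolding unit_ball_norm_eq by (rule cSUP_least) (auto intro: exI[of _ 0])

lemma norm_le_unit_ball_norm_spoly:
  "norm q \<le> 1 \<Longrightarrow> norm (spoly a n q) \<le> unit_ball_norm (spoly a n)"
  unfolding unit_ball_norm_eq
  by (rule cSUP_upper) (auto intro!: bdd_aboveI2 norm_spoly_le_sum_norm)

lemma unit_ball_norm_eq_max:
  "norm q\<^sub>0 \<le> 1 \<Longrightarrow> (\<And>q. norm q \<le> 1 \<Longrightarrow> norm (F q) \<le> norm (F q\<^sub>0))
    \<Longrightarrow> unit_ball_norm F = norm (F q\<^sub>0)"
  unfolding unit_ball_norm_eq by (rule cSup_eq_maximum) auto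

lemma compact_quat_sphere: "compact {q :: quat. norm q = 1}"
proof -
  define f where
    "f p = Quat (Complex.Re (fst p)) (Complex.Im (fst p)) (Complex.Re (snd p)) (Complex.Im (snd p))"
    for p :: "complex \<times> complex"
  have norm_f: "norm (f p) = norm p" for p
    by (cases p) (simp add: f_def norm_Pair norm_quat_def qnorm_def cmod_power2 add.assoc)
  have "bounded_linear f"
  proof (rule bounded_linear_intro[where K = 1])
    show "f (p + p') = f p + f p'" "f (c *\<^sub>R p) = c *\<^sub>R f p" for p p' c
      by (simp_all add: f_def quat_eq_iff)
    show "norm (f p) \<le> norm p * 1" for p by (simp add: norm_f)
  qed
  then have "compact (f ` sphere 0 1)"
    by (intro compact_continuous_image linear_continuous_on compact_sphere)
  moreover have "f ` sphere 0 1 = {q. norm q = 1}"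
  proof
    show "f ` sphere 0 1 \<subseteq> {q. norm q = 1}" by (auto simp: norm_f)
    show "{q. norm q = 1} \<subseteq> f ` sphere 0 1"
    proof
      fix q :: quat assume "q \<in> {q. norm q = 1}"
      moreover have fq: "q = f (cd_fst q, cd_snd q)" by (simp add: f_def quat_eq_iff)
      ultimately have "(cd_fst q, cd_snd q) \<in> sphere 0 1"
        using norm_f[of "(cd_fst q, cd_snd q)"] by simp
      with fq show "q \<in> f ` sphere 0 1" by (rule image_eqI)
    qed
  qed
  ultimately show ?thesis by simp
qed

lemma spoly_lower_coeffs_eq_0:
  assumes "\<And>j. j < n \<Longrightarrow> a j = 0"
  shows "spoly a n q = q ^ n * a n"
proof -
  have "spoly a n q = q ^ n * a n + (\<Sum>j\<in>{..n} - {n}. q ^ j * a j)"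
    unfolding spoly_eq by (rule sum.remove) auto
  also have "(\<Sum>j\<in>{..n} - {n}. q ^ j * a j) = 0"
    by (rule sum.neutral) (auto simp: assms)
  finally show ?thesis by simp
qed

lemma spoly_deriv_lower_coeffs_eq_0:
  assumes "\<And>j. j < n \<Longrightarrow> a j = 0"
  shows "spoly_deriv a n q = q ^ (n - 1) * (real n *\<^sub>R a n)"
proof (cases "n = 0")
  case False
  then have "spoly_deriv a n q
      = q ^ (n - 1) * (real n *\<^sub>R a n) + (\<Sum>j\<in>{1..n} - {n}. q ^ (j - 1) * (real j *\<^sub>R a j))"
    unfolding spoly_deriv_eq by (intro sum.remove) auto
  also have "(\<Sum>j\<in>{1..n} - {n}. q ^ (j - 1) * (real j *\<^sub>R a j)) = 0"
    by (rule sum.neutral) (auto simp: assms)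
  finally show ?thesis by simp
qed (simp add: spoly_deriv_eq)

theorem bernstein_inequality:
  "unit_ball_norm (spoly_deriv a n) \<le> real n * unit_ball_norm (spoly a n)"
proof (cases "n = 0")
  case True
  then show ?thesis by (intro unit_ball_norm_le) (simp add: spoly_deriv_eq)
next
  case False
  then have n: "0 < n" by simp
  have "norm (spoly_deriv a n q) \<le> real n * unit_ball_norm (spoly a n)" if "norm q = 1" for q
    using spoly_deriv_sphere_bound[OF n norm_le_unit_ball_norm_spoly that] by simp
  then show ?thesis
    unfolding spoly_deriv_eq_spoly[OF n] by (metis unit_ball_norm_le spoly_maximum_modulus)
qed

lemma bernstein_equality_imp_lower_coeffs_eq_0:
  assumes eq: "unit_ball_norm (spoly_deriv a n) = real n * unit_ball_norm (spoly a n)"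
    and "j < n"
  shows "a j = 0"
proof -
  have n: "0 < n" using \<open>j < n\<close> by simp
  have "continuous_on {q. norm q = 1} (\<lambda>q. norm (spoly_deriv a n q))"
    unfolding spoly_deriv_eq by (intro continuous_intros)
  then obtain q\<^sub>0 where q\<^sub>0: "norm q\<^sub>0 = 1"
    and max: "\<And>q. norm q = 1 \<Longrightarrow> norm (spoly_deriv a n q) \<le> norm (spoly_deriv a n q\<^sub>0)"
    using continuous_attains_sup[OF compact_quat_sphere, of "\<lambda>q. norm (spoly_deriv a n q)"]
    by (metis (mono_tags) mem_Collect_eq norm_one empty_iff)
  have "unit_ball_norm (spoly_deriv a n) = norm (spoly_deriv a n q\<^sub>0)"
    using q\<^sub>0 max unfolding spoly_deriv_eq_spoly[OF n]
    by (metis order_refl unit_ball_norm_eq_max spoly_maximum_modulus)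
  then have "norm (spoly_deriv a n q\<^sub>0) = real n * unit_ball_norm (spoly a n)"
    using eq by simp
  then show ?thesis
    using spoly_deriv_sphere_eq_imp_lower_coeffs_eq_0[OF n norm_le_unit_ball_norm_spoly q\<^sub>0]
      \<open>j < n\<close> by simp
qed

lemma lower_coeffs_eq_0_imp_bernstein_equality:
  assumes "\<And>j. j < n \<Longrightarrow> a j = 0"
  shows "unit_ball_norm (spoly_deriv a n) = real n * unit_ball_norm (spoly a n)"
proof -
  have monomial_max: "norm (q ^ k * c) \<le> norm c" if "norm q \<le> 1" for q :: quat and k c
    using power_le_one[OF norm_ge_zero that, of k]
    by (simp add: norm_mult norm_power mult_left_le_one_le)
  have "unit_ball_norm (spoly a n) = norm (spoly a n 1)"
    by (rule unit_ball_norm_eq_max)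
      (simp_all only: spoly_lower_coeffs_eq_0[OF assms] power_one mult_1_left monomial_max
        norm_one order_refl)
  moreover have "unit_ball_norm (spoly_deriv a n) = norm (spoly_deriv a n 1)"
    by (rule unit_ball_norm_eq_max)
      (simp_all only: spoly_deriv_lower_coeffs_eq_0[OF assms] power_one mult_1_left monomial_max
        norm_one order_refl)
  ultimately show ?thesis
    by (simp add: spoly_lower_coeffs_eq_0[OF assms] spoly_deriv_lower_coeffs_eq_0[OF assms])
qed

lemma spoly_eq_monomial_iff: "(\<exists>c. \<forall>q. spoly a n q = q ^ n * c) \<longleftrightarrow> (\<forall>j<n. a j = 0)"
proof
  assume "\<exists>c. \<forall>q. spoly a n q = q ^ n * c"
  then obtain c where "\<And>q. spoly a n q = q ^ n * c" by blast
  moreover have "n < card (of_nat ` {..n} :: complex set)"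
    by (simp add: card_image inj_on_def)
  ultimately show "\<forall>j<n. a j = 0"
    using lower_coeffs_eq_0_if_monomial_values[of "of_nat ` {..n}" n 1 a c] by auto
qed (auto intro: spoly_lower_coeffs_eq_0)

theorem theorem1p1:
  fixes a :: "nat \<Rightarrow> quat" and n :: nat
  assumes "a n \<noteq> qzero"
  shows "unit_ball_norm (spoly_deriv a n) \<le> real n * unit_ball_norm (spoly a n)
    \<and> (unit_ball_norm (spoly_deriv a n) = real n * unit_ball_norm (spoly a n)
         \<longleftrightarrow> (\<exists>c. \<forall>q. spoly a n q = qmult (qpow q n) c))"
proof -
  have "unit_ball_norm (spoly_deriv a n) = real n * unit_ball_norm (spoly a n)
      \<longleftrightarrow> (\<forall>j<n. a j = 0)"
    using bernstein_equality_imp_lower_coeffs_eq_0 lower_coeffs_eq_0_imp_bernstein_equality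
    by blast
  moreover have "qmult (qpow q n) c = q ^ n * c" for q c
    by (simp add: times_quat_def qpow_eq_power)
  ultimately show ?thesis
    using bernstein_inequality spoly_eq_monomial_iff by simp
qed

end
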